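(* Let $U\subseteq\mathbb{C}$ be open and $h:U\to\mathbb{C}$ holomorphic without zeros on $U$, $h=h_1+ih_2$ with $h_1,h_2$ real-valued functions of $(z_1,z_2)$, $z=z_1+iz_2$. Equip $U\subseteq\mathbb{R}^2$ with the Riemannian metric $g_{11}=g_{22}=1/(h_1^2+h_2^2)$, $g_{12}=g_{21}=0$ in coordinates $(z_1,z_2)$, and let $\nabla$ be its Levi-Civita connection. Let $\mathbf{h}=(h_1,h_2)^T$ and define the vector fields $\mathtt{h}=h_1\partial_1+h_2\partial_2$ and $\bar{\mathtt{h}}=-h_2\partial_1+h_1\partial_2$. Let $\mathtt{X}=X^1\partial_1+X^2\partial_2$ be a vector field such that $X^1+iX^2$ is a holomorphic function of $z=z_1+iz_2$ on $U$, and write $\mathbf{X}=(X^1,X^2)^T$. Let $J_{\mathbf{X}},J_{\mathbf{h}}\in\mathbb{R}^{2\times2}$ be the Jacobian matrices of $\mathbf{X}$ and $\mathbf{h}$ with respect to $(z_1,z_2)$, and $E=\begin{pmatrix}0&-1\\1&0\end{pmatrix}$. Then $$\nabla_{\mathtt{h}}\mathtt{X}=\sum_{k=1}^2\big(J_{\mathbf{X}}\mathbf{h}-J_{\mathbf{h}}\mathbf{X}\big)^k\partial_k,\qquad \nabla_{\bar{\mathtt{h}}}\mathtt{X}=\sum_{k=1}^2\big(E(J_{\mathbf{X}}\mathbf{h}-J_{\mathbf{h}}\mathbf{X})\big)^k\partial_k,$$ where $(\cdot)^k$ denotes the $k$-th component of a vector in $\mathbb{R}^2$.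
   Context: $\partial_k$ denotes the coordinate tangent vector in direction $z_k$. A vector field $X^1\partial_1+X^2\partial_2$ with $X^1+iX^2$ holomorphic is called a holomorphic splitting (of the holomorphic function $X^1+iX^2$); $\mathtt{h}$ and $\bar{\mathtt{h}}$ are the holomorphic splittings of $h$ and $ih$ respectively. *)

theory Defs
  imports "HOL-Complex_Analysis.Complex_Analysis"
begin

text \<open>We identify R^2 with C via (z1,z2) <-> z1 + i z2. Coordinate indices are 1 and 2.
  Scalar functions are of type complex => real; vector fields and 2-tensors are given by
  their coordinate components, indexed by nat (only indices 1, 2 are relevant).\<close>

definition coord_dir :: "nat \<Rightarrow> complex" where
  "coord_dir k = (if k = 1 then 1 else \<i>)"

definition pd :: "nat \<Rightarrow> (complex \<Rightarrow> real) \<Rightarrow> complex \<Rightarrow> real" where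
  "pd k f z = deriv (\<lambda>t::real. f (z + of_real t * coord_dir k)) 0"

definition splitting :: "(complex \<Rightarrow> complex) \<Rightarrow> nat \<Rightarrow> complex \<Rightarrow> real" where
  "splitting f k z = (if k = 1 then Re (f z) else Im (f z))"

definition inv_metric :: "(nat \<Rightarrow> nat \<Rightarrow> complex \<Rightarrow> real) \<Rightarrow> nat \<Rightarrow> nat \<Rightarrow> complex \<Rightarrow> real" where
  "inv_metric g k l z =
     (let d = g 1 1 z * g 2 2 z - g 1 2 z * g 2 1 z in
      if k = 1 \<and> l = 1 then g 2 2 z / d
      else if k = 1 \<and> l = 2 then - g 1 2 z / d
      else if k = 2 \<and> l = 1 then - g 2 1 z / d
      else g 1 1 z / d)"

definition christoffel :: "(nat \<Rightarrow> nat \<Rightarrow> complex \<Rightarrow> real) \<Rightarrow> nat \<Rightarrow> nat \<Rightarrow> nat \<Rightarrow> complex \<Rightarrow> real" where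
  "christoffel g k i j z =
     (1/2) * (\<Sum>l\<in>{1,2}. inv_metric g k l z *
        (pd i (g j l) z + pd j (g i l) z - pd l (g i j) z))"

definition lc_cov :: "(nat \<Rightarrow> nat \<Rightarrow> complex \<Rightarrow> real) \<Rightarrow> (nat \<Rightarrow> complex \<Rightarrow> real)
    \<Rightarrow> (nat \<Rightarrow> complex \<Rightarrow> real) \<Rightarrow> nat \<Rightarrow> complex \<Rightarrow> real" where
  "lc_cov g Y X k z =
     (\<Sum>i\<in>{1,2}. Y i z * pd i (X k) z)
     + (\<Sum>i\<in>{1,2}. \<Sum>j\<in>{1,2}. christoffel g k i j z * Y i z * X j z)"

definition conf_metric :: "(complex \<Rightarrow> complex) \<Rightarrow> nat \<Rightarrow> nat \<Rightarrow> complex \<Rightarrow> real" where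
  "conf_metric h i j z = (if i = j then 1 / ((Re (h z))\<^sup>2 + (Im (h z))\<^sup>2) else 0)"

definition jac :: "(nat \<Rightarrow> complex \<Rightarrow> real) \<Rightarrow> nat \<Rightarrow> nat \<Rightarrow> complex \<Rightarrow> real" where
  "jac F k j z = pd j (F k) z"

definition bracket_vec :: "(nat \<Rightarrow> complex \<Rightarrow> real) \<Rightarrow> (nat \<Rightarrow> complex \<Rightarrow> real) \<Rightarrow> nat \<Rightarrow> complex \<Rightarrow> real" where
  "bracket_vec X H k z = (\<Sum>j\<in>{1,2}. jac X k j z * H j z) - (\<Sum>j\<in>{1,2}. jac H k j z * X j z)"

definition rotE :: "(nat \<Rightarrow> real) \<Rightarrow> nat \<Rightarrow> real" where
  "rotE v k = (if k = 1 then - v 2 else v 1)"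

end

theory Submission
  imports Defs
begin

(* For a conformal metric g = \<phi> |dz|^2 the Christoffel symbols give
   nabla_Y X = DX Y + ((Y \<phi>) X + (X \<phi>) Y - <X,Y> grad \<phi>) / (2 \<phi>).
   For \<phi> = 1/|h|^2 the derivative of log \<phi> along the direction c is -2 Re (c h'/h),
   and in complex notation the whole correction term collapses to -(h'/h) X Y.
   For holomorphic X = f, DX Y = f' Y by Cauchy-Riemann, so nabla_Y f = f' Y - h' f Y / h.
   Taking Y = h gives f' h - h' f, which is J_X h - J_h X, and Y = i h multiplies this by i, i.e. applies E. *)

definition component :: "nat \<Rightarrow> complex \<Rightarrow> real" where
  "component k w = (if k = 1 then Re w else Im w)"

lemma splitting_eq_component: "splitting F k z = component k (F z)"
  by (simp add: splitting_def component_def)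

lemma sum_component_mult:
  "(\<Sum>j\<in>{1,2}. component k (coord_dir j * a) * component j w) = component k (a * w)"
  by (simp add: component_def coord_dir_def algebra_simps)

lemma inner_component: "(\<Sum>j\<in>{1,2}. component j v * component j w) = Re (cnj v * w)"
  by (simp add: component_def)

lemma rotE_component: "rotE (\<lambda>m. component m w) k = component k (\<i> * w)"
  by (simp add: rotE_def component_def)

lemma has_vector_derivative_along_line:
  assumes "(F has_field_derivative D) (at z)"
  shows "((\<lambda>t::real. F (z + of_real t * c)) has_vector_derivative (c * D)) (at 0)"
proof -
  have line: "((\<lambda>t::real. z + of_real t * c) has_vector_derivative c) (at 0)"
    by (auto intro!: derivative_eq_intros simp: has_vector_derivative_def scaleR_conv_of_real)
  have "((F \<circ> (\<lambda>t::real. z + of_real t * c)) has_vector_derivative (D * c)) (at 0)"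
    using vector_derivative_diff_chain_within[OF line, of F "(*) D"] assms
    by (simp add: has_field_derivative_def has_derivative_at_withinI)
  then show ?thesis by (simp add: o_def mult.commute)
qed

lemma has_real_derivative_component_along_line:
  assumes "(F has_field_derivative D) (at z)"
  shows "((\<lambda>t::real. component k (F (z + of_real t * c))) has_real_derivative component k (c * D)) (at 0)"
  using has_vector_derivative_along_line[OF assms, of c]
  unfolding has_vector_derivative_complex_iff component_def
  by (simp add: has_real_derivative_iff_has_vector_derivative)

lemma pd_eqI:
  assumes "((\<lambda>t::real. f (z + of_real t * coord_dir k)) has_real_derivative D) (at 0)"
  shows "pd k f z = D"
  unfolding pd_def using assms by (rule DERIV_imp_deriv)

lemma pd_const_zero: "pd k (\<lambda>_. 0) z = 0"
  by (simp add: pd_def)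

lemma pd_splitting:
  assumes "(F has_field_derivative D) (at z)"
  shows "pd j (splitting F k) z = component k (coord_dir j * D)"
  unfolding splitting_eq_component[abs_def]
  by (rule pd_eqI, rule has_real_derivative_component_along_line[OF assms])

lemma pd_inverse_norm_square:
  assumes "(h has_field_derivative D) (at z)" and "h z \<noteq> 0"
  shows "pd j (\<lambda>w. 1 / ((Re (h w))\<^sup>2 + (Im (h w))\<^sup>2)) z
           = - 2 * Re (coord_dir j * D / h z) / ((Re (h z))\<^sup>2 + (Im (h z))\<^sup>2)"
proof (rule pd_eqI)
  let ?c = "coord_dir j" and ?N = "(Re (h z))\<^sup>2 + (Im (h z))\<^sup>2"
  let ?re = "\<lambda>t::real. Re (h (z + of_real t * ?c))" and ?im = "\<lambda>t::real. Im (h (z + of_real t * ?c))"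
  have "?N \<noteq> 0"
    using assms(2) complex_eq_0 by auto
  have re: "(?re has_real_derivative Re (?c * D)) (at 0)"
    and im: "(?im has_real_derivative Im (?c * D)) (at 0)"
    using has_real_derivative_component_along_line[OF assms(1), of 1 ?c]
      has_real_derivative_component_along_line[OF assms(1), of 2 ?c]
    by (simp_all add: component_def)
  define S where "S t = (?re t)\<^sup>2 + (?im t)\<^sup>2" for t
  have S: "(S has_real_derivative 2 * Re (cnj (h z) * (?c * D))) (at 0)"
    unfolding S_def using DERIV_add[OF DERIV_power[OF re, of 2] DERIV_power[OF im, of 2]]
    by (simp add: algebra_simps)
  have "S 0 = ?N"
    by (simp add: S_def)
  have "((\<lambda>t. inverse (S t)) has_real_derivative
           - (2 * Re (cnj (h z) * (?c * D)) * inverse (S 0 ^ Suc (Suc 0)))) (at 0)"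
    using \<open>?N \<noteq> 0\<close> \<open>S 0 = ?N\<close> by (intro DERIV_inverse_fun[OF S]) simp
  moreover have "- (2 * Re (cnj (h z) * (?c * D)) * inverse (S 0 ^ Suc (Suc 0)))
                   = - 2 * Re (?c * D / h z) / ?N"
    using \<open>?N \<noteq> 0\<close> unfolding \<open>S 0 = ?N\<close>
    by (simp add: Re_divide power2_eq_square field_simps minus_divide_left)
  ultimately have "((\<lambda>t. inverse (S t)) has_real_derivative - 2 * Re (?c * D / h z) / ?N) (at 0)"
    by (rule DERIV_cong)
  then show "((\<lambda>t. 1 / ((?re t)\<^sup>2 + (?im t)\<^sup>2)) has_real_derivative
      - 2 * Re (?c * D / h z) / ?N) (at 0)"
    by (simp add: S_def inverse_eq_divide)
qed

definition conformal_metric :: "(complex \<Rightarrow> real) \<Rightarrow> nat \<Rightarrow> nat \<Rightarrow> complex \<Rightarrow> real" where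
  "conformal_metric \<phi> i j z = (if i = j then \<phi> z else 0)"

lemma conf_metric_eq_conformal_metric:
  "conf_metric h = conformal_metric (\<lambda>w. 1 / ((Re (h w))\<^sup>2 + (Im (h w))\<^sup>2))"
  by (intro ext) (simp add: conf_metric_def conformal_metric_def)

lemma christoffel_conformal_metric:
  assumes "\<phi> z \<noteq> 0" and "k \<in> {1,2}"
  shows "christoffel (conformal_metric \<phi>) k i j z =
           ((if j = k then pd i \<phi> z else 0) + (if i = k then pd j \<phi> z else 0)
             - (if i = j then pd k \<phi> z else 0)) / (2 * \<phi> z)"
proof -
  have metric: "conformal_metric \<phi> i j = (if i = j then \<phi> else (\<lambda>_. 0))" for i j
    by (auto simp: conformal_metric_def)
  show ?thesis
    using assms
    by (auto simp: christoffel_def inv_metric_def metric pd_const_zero Let_def field_simps)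
qed

lemma lc_cov_conformal_metric:
  assumes "\<phi> z \<noteq> 0" and "k \<in> {1,2}"
  shows "lc_cov (conformal_metric \<phi>) Y X k z =
           (\<Sum>i\<in>{1,2}. Y i z * pd i (X k) z)
           + (X k z * (\<Sum>i\<in>{1,2}. Y i z * pd i \<phi> z) + Y k z * (\<Sum>i\<in>{1,2}. X i z * pd i \<phi> z)
              - (\<Sum>i\<in>{1,2}. Y i z * X i z) * pd k \<phi> z) / (2 * \<phi> z)"
  using assms(2)
  by (auto simp: lc_cov_def christoffel_conformal_metric[of \<phi> z, OF assms]
      diff_divide_distrib add_divide_distrib algebra_simps)

lemma component_triple_product:
  "component k X * Re (\<rho> * Y) + component k Y * Re (\<rho> * X) - Re (cnj X * Y) * Re (coord_dir k * \<rho>)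
     = component k (\<rho> * X * Y)"
  by (simp add: component_def coord_dir_def algebra_simps)

lemma lc_cov_conf_metric_splitting:
  assumes h: "(h has_field_derivative h') (at z)" and "h z \<noteq> 0"
    and f: "(f has_field_derivative f') (at z)" and "k \<in> {1,2}"
  shows "lc_cov (conf_metric h) (splitting Y) (splitting f) k z
           = component k (f' * Y z - h' / h z * f z * Y z)"
proof -
  define \<phi> where "\<phi> w = 1 / ((Re (h w))\<^sup>2 + (Im (h w))\<^sup>2)" for w
  let ?\<rho> = "h' / h z"
  have "\<phi> z \<noteq> 0"
    using \<open>h z \<noteq> 0\<close> complex_eq_0 by (auto simp: \<phi>_def)
  have pd_\<phi>: "pd i \<phi> z = - 2 * \<phi> z * Re (coord_dir i * ?\<rho>)" for i
    using pd_inverse_norm_square[OF h \<open>h z \<noteq> 0\<close>, of i] by (simp add: \<phi>_def[abs_def])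
  have sum_pd_\<phi>: "(\<Sum>i\<in>{1,2}. splitting V i z * pd i \<phi> z) = - 2 * \<phi> z * Re (?\<rho> * V z)" for V
  proof -
    have "(\<Sum>i\<in>{1,2}. splitting V i z * pd i \<phi> z)
            = - 2 * \<phi> z * (\<Sum>i\<in>{1,2}. component 1 (coord_dir i * ?\<rho>) * component i (V z))"
      by (simp add: pd_\<phi> splitting_eq_component component_def algebra_simps)
    also have "\<dots> = - 2 * \<phi> z * Re (?\<rho> * V z)"
      unfolding sum_component_mult by (simp add: component_def)
    finally show ?thesis .
  qed
  have derivative: "(\<Sum>i\<in>{1,2}. splitting Y i z * pd i (splitting f k) z) = component k (f' * Y z)"
    using sum_component_mult[of k f' "Y z"]
    by (simp add: pd_splitting[OF f] splitting_eq_component mult.commute)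
  have inner: "(\<Sum>i\<in>{1,2}. splitting Y i z * splitting f i z) = Re (cnj (f z) * Y z)"
    using inner_component[of "f z" "Y z"] by (simp add: splitting_eq_component mult.commute)
  have "lc_cov (conf_metric h) (splitting Y) (splitting f) k z
          = component k (f' * Y z)
            + (component k (f z) * (- 2 * \<phi> z * Re (?\<rho> * Y z))
               + component k (Y z) * (- 2 * \<phi> z * Re (?\<rho> * f z))
               - Re (cnj (f z) * Y z) * (- 2 * \<phi> z * Re (coord_dir k * ?\<rho>))) / (2 * \<phi> z)"
    unfolding conf_metric_eq_conformal_metric \<phi>_def[symmetric]
      lc_cov_conformal_metric[of \<phi> z, OF \<open>\<phi> z \<noteq> 0\<close> \<open>k \<in> {1,2}\<close>]
      derivative inner sum_pd_\<phi>
    by (simp add: pd_\<phi> splitting_eq_component)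
  also have "\<dots> = component k (f' * Y z)
                    - (component k (f z) * Re (?\<rho> * Y z) + component k (Y z) * Re (?\<rho> * f z)
                       - Re (cnj (f z) * Y z) * Re (coord_dir k * ?\<rho>))"
    using \<open>\<phi> z \<noteq> 0\<close> by (simp add: field_simps)
  also have "\<dots> = component k (f' * Y z) - component k (?\<rho> * f z * Y z)"
    unfolding component_triple_product ..
  also have "\<dots> = component k (f' * Y z - h' / h z * f z * Y z)"
    by (simp add: component_def)
  finally show ?thesis .
qed

lemma bracket_vec_splitting:
  assumes "(f has_field_derivative f') (at z)" and "(h has_field_derivative h') (at z)"
  shows "bracket_vec (splitting f) (splitting h) k z = component k (f' * h z - h' * f z)"
  using sum_component_mult[of k f' "h z"] sum_component_mult[of k h' "f z"]
  by (simp add: bracket_vec_def jac_def pd_splitting[OF assms(1)] pd_splitting[OF assms(2)]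
      splitting_eq_component component_def)

theorem lemma2:
  fixes U :: "complex set" and h f :: "complex \<Rightarrow> complex"
  assumes "open U"
    and "h holomorphic_on U"
    and "\<forall>z\<in>U. h z \<noteq> 0"
    and "f holomorphic_on U"
  shows "\<forall>z\<in>U. \<forall>k\<in>{1,2}.
           lc_cov (conf_metric h) (splitting h) (splitting f) k z
             = bracket_vec (splitting f) (splitting h) k z
         \<and> lc_cov (conf_metric h) (splitting (\<lambda>w. \<i> * h w)) (splitting f) k z
             = rotE (\<lambda>m. bracket_vec (splitting f) (splitting h) m z) k"
proof (intro ballI conjI)
  fix z and k :: nat
  assume "z \<in> U" and k: "k \<in> {1,2}"
  have h: "(h has_field_derivative deriv h z) (at z)" and f: "(f has_field_derivative deriv f z) (at z)"
    using assms(1,2,4) \<open>z \<in> U\<close> holomorphic_derivI by blast+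
  have "h z \<noteq> 0"
    using assms(3) \<open>z \<in> U\<close> by blast
  note cov = lc_cov_conf_metric_splitting[OF h \<open>h z \<noteq> 0\<close> f k]
  note bracket = bracket_vec_splitting[OF f h]
  show "lc_cov (conf_metric h) (splitting h) (splitting f) k z
          = bracket_vec (splitting f) (splitting h) k z"
    using \<open>h z \<noteq> 0\<close> by (simp add: cov bracket field_simps)
  show "lc_cov (conf_metric h) (splitting (\<lambda>w. \<i> * h w)) (splitting f) k z
          = rotE (\<lambda>m. bracket_vec (splitting f) (splitting h) m z) k"
    using \<open>h z \<noteq> 0\<close> by (simp add: cov bracket rotE_component field_simps)
qed

end
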